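(* Let $G$ be a finite simple graph with $|E(G)| \le 2|V(G)| - 1$ and minimum degree $\delta(G) \ge 2$. Then there exists a vertex $v$ of $G$, with $k = \deg(v)$, such that at least one of the following holds: (B1) $k = 2$; (B2) $k = 3$ and at least two neighbours of $v$ have degree at most $4$; (B3) $k = 5$ and at least three neighbours of $v$ have degree at most $3$; (B4) $k = 6$ and at least five neighbours of $v$ have degree at most $3$; (B5) $k \ge 7$ and all $k$ neighbours of $v$ have degree at most $3$. *)

theory Defs
  imports Main
begin

definition finite_simple_graph :: "'a set \<Rightarrow> 'a set set \<Rightarrow> bool" where
  "finite_simple_graph V E \<longleftrightarrow> finite V \<and> (\<forall>e\<in>E. e \<subseteq> V \<and> card e = 2)"

definition neighbours :: "'a set set \<Rightarrow> 'a \<Rightarrow> 'a set" where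
  "neighbours E v = {u. {u, v} \<in> E}"

definition degree :: "'a set set \<Rightarrow> 'a \<Rightarrow> nat" where
  "degree E v = card (neighbours E v)"

end

theory Submission
  imports Defs
begin

text \<open>Give every vertex the charge 2 deg(v) - 8; by the handshake lemma the total
is 4|E| - 8|V| < 0. Then let every vertex of degree at least 5 send one unit to each neighbour of
degree at most 3. This preserves the total, yet if no vertex satisfies (B1)--(B5) and the minimum
degree is 2, every vertex ends up with nonnegative charge: a vertex of degree 3 has at least two
neighbours of degree at least 5, a vertex of degree 5 or 6 sends at most 2 resp. 4 units, and a
vertex of degree k \<ge> 7 sends at most k - 1 units.\<close>

definition reducible :: "'a set set \<Rightarrow> 'a \<Rightarrow> bool" where
  "reducible E v \<longleftrightarrow> (let k = degree E v in
           k = 2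
         \<or> (k = 3 \<and> card {u \<in> neighbours E v. degree E u \<le> 4} \<ge> 2)
         \<or> (k = 5 \<and> card {u \<in> neighbours E v. degree E u \<le> 3} \<ge> 3)
         \<or> (k = 6 \<and> card {u \<in> neighbours E v. degree E u \<le> 3} \<ge> 5)
         \<or> (k \<ge> 7 \<and> (\<forall>u \<in> neighbours E v. degree E u \<le> 3)))"

definition discharged_charge :: "'a set set \<Rightarrow> 'a \<Rightarrow> int" where
  "discharged_charge E v = 2 * int (degree E v) - 8
     + (if degree E v \<le> 3 then int (card {u \<in> neighbours E v. degree E u \<ge> 5}) else 0)
     - (if degree E v \<ge> 5 then int (card {u \<in> neighbours E v. degree E u \<le> 3}) else 0)"

lemma sum_card_filter_swap:
  assumes "finite A" and "finite B"
  shows "(\<Sum>a\<in>A. card {b \<in> B. R a b}) = (\<Sum>b\<in>B. card {a \<in> A. R a b})"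
proof -
  have card_eq: "\<And>a. card {b \<in> B. R a b} = (\<Sum>b\<in>B. of_bool (R a b))"
    and card_eq': "\<And>b. card {a \<in> A. R a b} = (\<Sum>a\<in>A. of_bool (R a b))"
    using assms by (simp_all add: Int_def conj_commute)
  show ?thesis
    unfolding card_eq card_eq' by (rule sum.swap)
qed

lemma neighbours_subset:
  assumes "finite_simple_graph V E"
  shows "neighbours E v \<subseteq> V"
  using assms unfolding finite_simple_graph_def neighbours_def by auto

lemma finite_neighbours:
  assumes "finite_simple_graph V E"
  shows "finite (neighbours E v)"
  using assms finite_subset[OF neighbours_subset[OF assms]] unfolding finite_simple_graph_def by simp

lemma finite_edges:
  assumes "finite_simple_graph V E"
  shows "finite E"
  using assms finite_subset[of E "Pow V"] unfolding finite_simple_graph_def by auto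

lemma degree_eq_card_incident_edges:
  assumes "finite_simple_graph V E"
  shows "degree E v = card {e \<in> E. v \<in> e}"
proof -
  have "bij_betw (\<lambda>u. {u, v}) (neighbours E v) {e \<in> E. v \<in> e}"
  proof (rule bij_betwI')
    fix e assume e: "e \<in> {e \<in> E. v \<in> e}"
    then obtain a b where "e = {a, b}"
      using assms unfolding finite_simple_graph_def by (metis (no_types, lifting) card_2_iff mem_Collect_eq)
    with e show "\<exists>u \<in> neighbours E v. e = {u, v}"
      by (auto simp: neighbours_def insert_commute)
  qed (auto simp: neighbours_def doubleton_eq_iff)
  then show ?thesis
    unfolding degree_def by (rule bij_betw_same_card)
qed

lemma sum_degree_eq_twice_card_edges:
  assumes "finite_simple_graph V E"
  shows "(\<Sum>v\<in>V. degree E v) = 2 * card E"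
proof -
  have fin: "finite V" "finite E"
    using assms finite_edges unfolding finite_simple_graph_def by auto
  have "(\<Sum>v\<in>V. degree E v) = (\<Sum>v\<in>V. card {e \<in> E. v \<in> e})"
    using degree_eq_card_incident_edges[OF assms] by simp
  also have "\<dots> = (\<Sum>e\<in>E. card {v \<in> V. v \<in> e})"
    using fin by (rule sum_card_filter_swap)
  also have "\<dots> = (\<Sum>e\<in>E. 2)"
  proof (rule sum.cong)
    fix e assume "e \<in> E"
    then have "e \<subseteq> V" "card e = 2"
      using assms unfolding finite_simple_graph_def by auto
    then show "card {v \<in> V. v \<in> e} = 2"
      by (simp add: Collect_mem_eq Int_absorb1 Int_def[symmetric] inf_commute)
  qed simp
  finally show ?thesis
    by simp
qed

lemma sum_discharged_charge:
  assumes "finite_simple_graph V E"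
  shows "(\<Sum>v\<in>V. discharged_charge E v) = 4 * int (card E) - 8 * int (card V)"
proof -
  define small where "small = {v \<in> V. degree E v \<le> 3}"
  define big where "big = {v \<in> V. degree E v \<ge> 5}"
  have fin: "finite V" "finite small" "finite big"
    using assms unfolding finite_simple_graph_def small_def big_def by auto
  have received: "{u \<in> neighbours E v. degree E u \<ge> 5} = {u \<in> big. {u, v} \<in> E}"
    and sent: "{u \<in> neighbours E v. degree E u \<le> 3} = {u \<in> small. {v, u} \<in> E}" for v
    using neighbours_subset[OF assms, of v]
    by (auto simp: small_def big_def neighbours_def insert_commute)
  have transfers_cancel:
    "(\<Sum>v\<in>small. card {u \<in> big. {u, v} \<in> E}) = (\<Sum>v\<in>big. card {u \<in> small. {v, u} \<in> E})"
    using fin(2,3) by (rule sum_card_filter_swap)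
  have "(\<Sum>v\<in>V. discharged_charge E v)
      = (\<Sum>v\<in>V. 2 * int (degree E v) - 8)
        + int (\<Sum>v\<in>small. card {u \<in> big. {u, v} \<in> E})
        - int (\<Sum>v\<in>big. card {u \<in> small. {v, u} \<in> E})"
    using fin(1)
    by (simp add: discharged_charge_def received sent sum.distrib sum_subtractf sum.If_cases
        small_def big_def Int_def conj_commute)
  also have "\<dots> = 2 * int (\<Sum>v\<in>V. degree E v) - 8 * int (card V)"
    by (simp add: transfers_cancel sum_subtractf sum_distrib_left)
  finally show ?thesis
    by (simp add: sum_degree_eq_twice_card_edges[OF assms])
qed

lemma discharged_charge_nonneg:
  assumes "finite_simple_graph V E" and "degree E v \<ge> 2" and "\<not> reducible E v"
  shows "discharged_charge E v \<ge> 0"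
proof -
  let ?N = "neighbours E v"
  have fin: "finite ?N"
    using assms(1) by (rule finite_neighbours)
  have nr: "degree E v \<noteq> 2"
    "degree E v = 3 \<Longrightarrow> card {u \<in> ?N. degree E u \<le> 4} \<le> 1"
    "degree E v = 5 \<Longrightarrow> card {u \<in> ?N. degree E u \<le> 3} \<le> 2"
    "degree E v = 6 \<Longrightarrow> card {u \<in> ?N. degree E u \<le> 3} \<le> 4"
    "degree E v \<ge> 7 \<Longrightarrow> \<exists>u \<in> ?N. degree E u > 3"
    using assms(3) unfolding reducible_def Let_def by (auto simp: not_le)
  consider "degree E v = 3" | "degree E v = 4" | "degree E v = 5" | "degree E v = 6" | "degree E v \<ge> 7"
    using assms(2) nr(1) by linarith
  then show ?thesis
  proof cases
    case 1
    have "card {u \<in> ?N. degree E u \<le> 4} + card {u \<in> ?N. degree E u \<ge> 5} = card ?N"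
      using fin by (subst card_Un_disjoint[symmetric]) (auto intro: arg_cong[where f = card])
    then have "card {u \<in> ?N. degree E u \<ge> 5} \<ge> 2"
      using 1 nr(2) unfolding degree_def by linarith
    with 1 show ?thesis
      by (simp add: discharged_charge_def)
  next
    case 5
    then obtain w where w: "w \<in> ?N" "degree E w > 3"
      using nr(5) by blast
    have "card {u \<in> ?N. degree E u \<le> 3} \<le> card (?N - {w})"
      using fin w by (intro card_mono) auto
    also have "\<dots> = degree E v - 1"
      using fin w(1) by (simp add: degree_def)
    finally show ?thesis
      using 5 by (simp add: discharged_charge_def)
  qed (use nr in \<open>auto simp: discharged_charge_def\<close>)
qed

theorem lemma4:
  fixes V :: "'a set" and E :: "'a set set"
  assumes "finite_simple_graph V E" and "V \<noteq> {}"
    and "card E \<le> 2 * card V - 1"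
    and "\<forall>v\<in>V. degree E v \<ge> 2"
  shows "\<exists>v\<in>V. let k = degree E v in
           k = 2
         \<or> (k = 3 \<and> card {u \<in> neighbours E v. degree E u \<le> 4} \<ge> 2)
         \<or> (k = 5 \<and> card {u \<in> neighbours E v. degree E u \<le> 3} \<ge> 3)
         \<or> (k = 6 \<and> card {u \<in> neighbours E v. degree E u \<le> 3} \<ge> 5)
         \<or> (k \<ge> 7 \<and> (\<forall>u \<in> neighbours E v. degree E u \<le> 3))"
proof -
  have "\<exists>v\<in>V. reducible E v"
  proof (rule ccontr)
    assume "\<not> (\<exists>v\<in>V. reducible E v)"
    then have "0 \<le> (\<Sum>v\<in>V. discharged_charge E v)"
      using assms(1,4) discharged_charge_nonneg by (metis sum_nonneg)
    also have "\<dots> = 4 * int (card E) - 8 * int (card V)"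
      using assms(1) by (rule sum_discharged_charge)
    finally have "2 * card V \<le> card E"
      by linarith
    moreover have "card V > 0"
      using assms(1,2) unfolding finite_simple_graph_def by auto
    ultimately show False
      using assms(3) by linarith
  qed
  then show ?thesis
    unfolding reducible_def .
qed

end
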